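(* Let $\tilde\nu$ be a probability measure on $\mathcal{C}_n$. Then there exists a product measure $\xi$ on $\mathcal{C}_n$ such that $$\mathrm{W}_1(\tilde\nu,\xi)\le\sqrt{n\,\mathrm{Tr}(\mathcal{H}(\tilde\nu))}.$$ Moreover, one may take $\xi$ to be the unique product measure whose center of mass lies at the point $\int_{\mathcal{C}_n}g_{\tilde\nu}(y)\,d\tilde\nu(y)$, which is equal to the center of mass of $\tilde\nu$.
   Context: $\mathcal{C}_n=\{-1,1\}^n$ with uniform probability measure $\mu$. For a probability measure $\nu$ on $\mathcal{C}_n$ with $f=\log\frac{d\nu}{d\mu}$, and $y\in\mathcal{C}_n$, $i\in[n]$, let $y_\pm$ agree with $y$ except the $i$-th coordinate equals $\pm1$; define $g_\nu(y)\in\mathbb{R}^n$ by $\langle g_\nu(y),e_i\rangle=\frac{e^{f(y_+)}-e^{f(y_-)}}{e^{f(y_+)}+e^{f(y_-)}}$ (taken to be $0$ if $\nu(y_+)=\nu(y_-)=0$). Define the matrix $\mathcal{H}(\nu)=\int g_\nu(y)^{\otimes2}d\nu(y)-\left(\int g_\nu(y)\,d\nu(y)\right)^{\otimes2}$, the covariance matrix of $g_\nu(X)$, $X\sim\nu$. $\mathrm{W}_1$ is the Wasserstein distance with respect to Hamming distance; a product measure is the law of a vector with independent coordinates. *)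

theory Defs
  imports "HOL-Probability.Probability"
begin

definition cube :: "nat \<Rightarrow> (nat \<Rightarrow> real) set" where
  "cube n = PiE {..<n} (\<lambda>_. {-1, 1})"

definition hamming :: "nat \<Rightarrow> (nat \<Rightarrow> real) \<Rightarrow> (nat \<Rightarrow> real) \<Rightarrow> nat" where
  "hamming n x y = card {i \<in> {..<n}. x i \<noteq> y i}"

definition W1 :: "nat \<Rightarrow> (nat \<Rightarrow> real) pmf \<Rightarrow> (nat \<Rightarrow> real) pmf \<Rightarrow> real" where
  "W1 n \<nu> \<xi> = Inf {measure_pmf.expectation c (\<lambda>(x, y). real (hamming n x y)) | c.
       map_pmf fst c = \<nu> \<and> map_pmf snd c = \<xi>}"

definition product_measure :: "nat \<Rightarrow> (nat \<Rightarrow> real) pmf \<Rightarrow> bool" where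
  "product_measure n \<xi> \<longleftrightarrow>
     (\<exists>q :: nat \<Rightarrow> real pmf. (\<forall>i<n. set_pmf (q i) \<subseteq> {-1, 1}) \<and> \<xi> = Pi_pmf {..<n} undefined q)"

text \<open>The vector g_nu(y); note e^{f(y)} = 2^n nu(y), so the ratio only involves nu.\<close>
definition gvec :: "(nat \<Rightarrow> real) pmf \<Rightarrow> (nat \<Rightarrow> real) \<Rightarrow> nat \<Rightarrow> real" where
  "gvec \<nu> y i =
     (let a = pmf \<nu> (y(i := 1)); b = pmf \<nu> (y(i := -1)) in
      if a = 0 \<and> b = 0 then 0 else (a - b) / (a + b))"

definition trace_H :: "nat \<Rightarrow> (nat \<Rightarrow> real) pmf \<Rightarrow> real" where
  "trace_H n \<nu> = (\<Sum>i<n. measure_pmf.expectation \<nu> (\<lambda>y. (gvec \<nu> y i)\<^sup>2)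
                        - (measure_pmf.expectation \<nu> (\<lambda>y. gvec \<nu> y i))\<^sup>2)"

definition center :: "(nat \<Rightarrow> real) pmf \<Rightarrow> nat \<Rightarrow> real" where
  "center \<nu> i = measure_pmf.expectation \<nu> (\<lambda>x. x i)"

end

theory Submission
  imports Defs
begin

text \<open>Run the random-scan Glauber dynamics of \<open>\<nu>\<close> and of a product measure \<open>\<xi>\<close> side by side: both
  chains update the same uniformly chosen coordinate \<open>i\<close>, resampling it through the maximal coupling
  of the two conditional laws of the \<open>i\<close>-th coordinate given the others. Both chains are stationary,
  and one step maps a coupling of cost \<open>W\<close> to one of cost at most \<open>(1 - 1/n) W + D/n\<close>, where \<open>D\<close> is
  the expected total variation between the conditional laws; taking the infimum over couplings
  gives \<open>W\<^sub>1(\<nu>, \<xi>) \<le> D\<close>. Under \<open>\<nu>\<close> the conditional probability of a \<open>+1\<close> is \<open>(1 + g\<^sub>i(x))/2\<close>; under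
  a product measure with centre \<open>m\<close> it is \<open>(1 + m\<^sub>i)/2\<close> whatever the other coordinates are. Hence
  \<open>W\<^sub>1(\<nu>, \<xi>) \<le> (1/2) E\<^sub>\<nu> \<Sum>\<^sub>i \<bar>g\<^sub>i - m\<^sub>i\<bar>\<close>, and for \<open>m = E\<^sub>\<nu> g\<close> Cauchy-Schwarz in \<open>\<nu>\<close> and then in \<open>i\<close>
  bounds this by \<open>(1/2) sqrt (n Tr H(\<nu>))\<close>. Stationarity of a single Glauber update also gives
  \<open>E\<^sub>\<nu> x\<^sub>i = E\<^sub>\<nu> g\<^sub>i\<close>.\<close>

definition sign_pmf :: "real \<Rightarrow> real pmf" where
  "sign_pmf p = pmf_of_list [(1, p), (-1, 1 - p)]"

lemma sign_pmf_wf: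
  fixes p :: real
  shows "0 \<le> p \<Longrightarrow> p \<le> 1 \<Longrightarrow> pmf_of_list_wf [(1::real, p), (-1, 1 - p)]"
  by (auto simp: pmf_of_list_wf_def)

lemma measure_sign_pmf:
  "0 \<le> p \<Longrightarrow> p \<le> 1 \<Longrightarrow>
     measure (sign_pmf p) S = (if 1 \<in> S then p else 0) + (if -1 \<in> S then 1 - p else 0)"
  unfolding sign_pmf_def by (subst measure_pmf_of_list[OF sign_pmf_wf]) auto

lemma set_sign_pmf: "0 \<le> p \<Longrightarrow> p \<le> 1 \<Longrightarrow> set_pmf (sign_pmf p) \<subseteq> {-1, 1}"
  unfolding sign_pmf_def using set_pmf_of_list[OF sign_pmf_wf] by auto

lemma expectation_sign_pmf:
  assumes "0 \<le> p" "p \<le> 1"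
  shows "measure_pmf.expectation (sign_pmf p) f = p * f 1 + (1 - p) * f (-1)"
proof -
  have "measure_pmf.expectation (sign_pmf p) f = (\<Sum>a\<in>{-1, 1}. f a * pmf (sign_pmf p) a)"
    by (rule integral_measure_pmf_real) (use set_sign_pmf[OF assms] in auto)
  then show ?thesis
    using assms by (simp add: measure_pmf_single[symmetric] measure_sign_pmf)
qed

lemma expectation_sign_valued:
  fixes M :: "real pmf" and f :: "real \<Rightarrow> real"
  assumes "set_pmf M \<subseteq> {-1, 1}"
  shows "measure_pmf.expectation M f = pmf M 1 * f 1 + pmf M (-1) * f (-1)"
proof -
  have "measure_pmf.expectation M f = (\<Sum>a\<in>{-1, 1}. f a * pmf M a)"
    by (rule integral_measure_pmf_real) (use assms in auto)
  then show ?thesis by simp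
qed

lemma pmf_sign_valued_total:
  fixes M :: "real pmf"
  assumes "set_pmf M \<subseteq> {-1, 1}"
  shows "pmf M 1 + pmf M (-1) = 1"
  using expectation_sign_valued[OF assms, of "\<lambda>_. 1"] by simp

lemma pmf_sign_valued_1:
  fixes M :: "real pmf"
  assumes "set_pmf M \<subseteq> {-1, 1}"
  shows "pmf M 1 = (1 + measure_pmf.expectation M (\<lambda>x. x)) / 2"
  using pmf_sign_valued_total[OF assms] expectation_sign_valued[OF assms, of "\<lambda>x. x"] by simp

lemma sign_valued_pmf_eq_sign_pmf:
  fixes M :: "real pmf"
  assumes "set_pmf M \<subseteq> {-1, 1}"
  shows "M = sign_pmf ((1 + measure_pmf.expectation M (\<lambda>x. x)) / 2)"
  unfolding pmf_sign_valued_1[OF assms, symmetric]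
proof (rule pmf_eqI)
  fix a :: real
  have total: "pmf M 1 + pmf M (-1) = 1" by (rule pmf_sign_valued_total[OF assms])
  then have bounds: "0 \<le> pmf M 1" "pmf M 1 \<le> 1"
    using pmf_nonneg[of M "-1"] pmf_nonneg[of M 1] by linarith+
  have "pmf (sign_pmf (pmf M 1)) a = (if a = 1 then pmf M 1 else 0) + (if a = -1 then 1 - pmf M 1 else 0)"
    using measure_sign_pmf[OF bounds, of "{a}"] by (simp add: measure_pmf_single)
  then show "pmf M a = pmf (sign_pmf (pmf M 1)) a"
    using total assms by (auto simp: set_pmf_iff)
qed

lemma cube_coord: "x \<in> cube n \<Longrightarrow> i < n \<Longrightarrow> x i = -1 \<or> x i = 1"
  by (auto simp: cube_def PiE_def)

lemma finite_cube: "finite (cube n)"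
  unfolding cube_def by (intro finite_PiE) auto

text \<open>The value \<open>1/2\<close> on null fibres matches the convention of \<open>gvec\<close>, see \<open>gvec_eq_cond_plus\<close>.\<close>
definition cond_plus :: "(nat \<Rightarrow> real) pmf \<Rightarrow> (nat \<Rightarrow> real) \<Rightarrow> nat \<Rightarrow> real" where
  "cond_plus \<mu> x i = (let a = pmf \<mu> (x(i := 1)); b = pmf \<mu> (x(i := -1)) in
      if a + b = 0 then 1/2 else a / (a + b))"

lemma cond_plus_fun_upd [simp]: "cond_plus \<mu> (x(i := c)) i = cond_plus \<mu> x i"
  by (simp add: cond_plus_def)

lemma cond_plus_weights:
  "cond_plus \<mu> x i * (pmf \<mu> (x(i := 1)) + pmf \<mu> (x(i := -1))) = pmf \<mu> (x(i := 1))"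
  "(1 - cond_plus \<mu> x i) * (pmf \<mu> (x(i := 1)) + pmf \<mu> (x(i := -1))) = pmf \<mu> (x(i := -1))"
  using pmf_nonneg[of \<mu> "x(i := 1)"] pmf_nonneg[of \<mu> "x(i := -1)"]
  by (auto simp: cond_plus_def Let_def field_simps add_nonneg_eq_0_iff)

lemma cond_plus_bounds: "0 \<le> cond_plus \<mu> x i" "cond_plus \<mu> x i \<le> 1"
  using pmf_nonneg[of \<mu> "x(i := 1)"] pmf_nonneg[of \<mu> "x(i := -1)"]
  by (auto simp: cond_plus_def Let_def divide_le_eq_1 add_nonneg_eq_0_iff less_le)

lemma gvec_eq_cond_plus: "gvec \<mu> x i = 2 * cond_plus \<mu> x i - 1"
  using pmf_nonneg[of \<mu> "x(i := 1)"] pmf_nonneg[of \<mu> "x(i := -1)"]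
  by (auto simp: gvec_def cond_plus_def Let_def field_simps add_nonneg_eq_0_iff)

definition glauber_step :: "(nat \<Rightarrow> real) pmf \<Rightarrow> nat \<Rightarrow> (nat \<Rightarrow> real) \<Rightarrow> (nat \<Rightarrow> real) pmf" where
  "glauber_step \<mu> i x = map_pmf (fun_upd x i) (sign_pmf (cond_plus \<mu> x i))"

lemma pmf_glauber_step:
  "pmf (glauber_step \<mu> i x) z =
     (if x(i := 1) = z then cond_plus \<mu> x i else 0) + (if x(i := -1) = z then 1 - cond_plus \<mu> x i else 0)"
  unfolding glauber_step_def pmf_map by (subst measure_sign_pmf) (auto simp: cond_plus_bounds)

lemma glauber_step_stationary:
  assumes \<mu>: "set_pmf \<mu> \<subseteq> cube n" and i: "i < n"
  shows "bind_pmf \<mu> (glauber_step \<mu> i) = \<mu>"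
proof (rule pmf_eqI)
  fix z :: "nat \<Rightarrow> real"
  define c where "c = cond_plus \<mu> z i"
  define w where "w = (if z i = 1 then c else if z i = -1 then 1 - c else 0)"
  let ?zp = "z(i := 1)" and ?zm = "z(i := -1)"
  have neq: "?zp \<noteq> ?zm" by (metis fun_upd_same one_neq_neg_one)
  have step_z: "pmf (glauber_step \<mu> i a) z = w" if "a \<in> {?zp, ?zm}" for a
    using that by (auto simp: pmf_glauber_step w_def c_def fun_upd_idem_iff)
  have "pmf (bind_pmf \<mu> (glauber_step \<mu> i)) z
      = (\<Sum>a\<in>{?zp, ?zm}. pmf (glauber_step \<mu> i a) z * pmf \<mu> a)"
    unfolding pmf_bind
  proof (rule integral_measure_pmf_real)
    fix a assume a: "a \<in> set_pmf \<mu>" "pmf (glauber_step \<mu> i a) z \<noteq> 0"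
    have "a(i := 1) = z \<or> a(i := -1) = z"
      using a(2) by (auto simp: pmf_glauber_step split: if_splits)
    then have "a = z(i := a i)" by auto
    moreover have "a i = -1 \<or> a i = 1" using cube_coord a(1) \<mu> i by blast
    ultimately show "a \<in> {?zp, ?zm}" by force
  qed simp
  also have "\<dots> = w * (pmf \<mu> ?zp + pmf \<mu> ?zm)"
    using neq by (simp add: step_z algebra_simps)
  also have "\<dots> = pmf \<mu> z"
  proof -
    consider "z i = 1" | "z i = -1" | "z i \<notin> {-1, 1}" by blast
    then show ?thesis
    proof cases
      case 1
      then show ?thesis using cond_plus_weights(1)[of \<mu> z i] by (simp add: w_def c_def fun_upd_idem)
    next
      case 2
      then show ?thesis using cond_plus_weights(2)[of \<mu> z i] by (simp add: w_def c_def fun_upd_idem)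
    next
      case 3
      then have "pmf \<mu> z = 0"
        using cube_coord[of z n i] \<mu> i by (auto simp: set_pmf_iff)
      then show ?thesis using 3 by (simp add: w_def)
    qed
  qed
  finally show "pmf (bind_pmf \<mu> (glauber_step \<mu> i)) z = pmf \<mu> z" .
qed

lemma expectation_bind_pmf_finite:
  fixes h :: "'b \<Rightarrow> real"
  assumes "finite (set_pmf p)" "\<And>x. x \<in> set_pmf p \<Longrightarrow> finite (set_pmf (f x))"
  shows "measure_pmf.expectation (bind_pmf p f) h
           = measure_pmf.expectation p (\<lambda>x. measure_pmf.expectation (f x) h)"
  using assms
  by (subst pmf_expectation_bind[of "set_pmf p"], simp_all)
     (subst integral_measure_pmf_real, auto simp: mult.commute)

lemma center_eq_expectation_gvec:
  assumes \<nu>: "set_pmf \<nu> \<subseteq> cube n" and i: "i < n"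
  shows "center \<nu> i = measure_pmf.expectation \<nu> (\<lambda>y. gvec \<nu> y i)"
proof -
  have finite_step: "finite (set_pmf (glauber_step \<nu> i x))" for x
    unfolding glauber_step_def
    using finite_subset[OF set_sign_pmf[OF cond_plus_bounds]] by simp
  have "center \<nu> i = measure_pmf.expectation (bind_pmf \<nu> (glauber_step \<nu> i)) (\<lambda>x. x i)"
    unfolding center_def glauber_step_stationary[OF \<nu> i] ..
  also have "\<dots> = measure_pmf.expectation \<nu> (\<lambda>x. measure_pmf.expectation (glauber_step \<nu> i x) (\<lambda>x. x i))"
    by (rule expectation_bind_pmf_finite[OF finite_subset[OF \<nu> finite_cube] finite_step])
  also have "\<dots> = measure_pmf.expectation \<nu> (\<lambda>y. gvec \<nu> y i)"
    unfolding glauber_step_def gvec_eq_cond_plus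
    by (simp add: expectation_sign_pmf cond_plus_bounds algebra_simps)
  finally show ?thesis .
qed

lemma abs_gvec_le_1: "\<bar>gvec \<mu> x i\<bar> \<le> 1"
  using cond_plus_bounds[of \<mu> x i] by (simp add: gvec_eq_cond_plus)

lemma integrable_gvec_power: "integrable (measure_pmf \<nu>) (\<lambda>y. (gvec \<nu> y i) ^ k)"
  by (intro measure_pmf.integrable_const_bound[of _ 1])
     (auto simp: power_abs abs_gvec_le_1 power_le_one)

lemma abs_expectation_gvec_le_1: "\<bar>measure_pmf.expectation \<nu> (\<lambda>y. gvec \<nu> y i)\<bar> \<le> 1"
proof -
  have "\<bar>measure_pmf.expectation \<nu> (\<lambda>y. gvec \<nu> y i)\<bar> \<le> measure_pmf.expectation \<nu> (\<lambda>y. \<bar>gvec \<nu> y i\<bar>)"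
    by (rule integral_abs_bound)
  also have "\<dots> \<le> 1"
    using integrable_gvec_power[of \<nu> i 1]
    by (intro measure_pmf.integral_le_const) (simp_all add: abs_gvec_le_1)
  finally show ?thesis .
qed

lemma trace_H_eq_sum_variance:
  "trace_H n \<nu> = (\<Sum>i<n. measure_pmf.expectation \<nu>
      (\<lambda>y. (gvec \<nu> y i - measure_pmf.expectation \<nu> (\<lambda>y. gvec \<nu> y i))\<^sup>2))"
  unfolding trace_H_def
  using integrable_gvec_power[of \<nu> _ 1] integrable_gvec_power[of \<nu> _ 2]
  by (intro sum.cong refl) (simp add: measure_pmf.variance_eq)

lemma trace_H_nonneg: "0 \<le> trace_H n \<nu>"
  unfolding trace_H_eq_sum_variance by (intro sum_nonneg integral_nonneg_AE) auto

context
  fixes n :: nat and q :: "nat \<Rightarrow> real pmf"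
  assumes q: "\<And>i. i < n \<Longrightarrow> set_pmf (q i) \<subseteq> {-1, 1}"
begin

lemma set_Pi_pmf_subset_cube: "set_pmf (Pi_pmf {..<n} undefined q) \<subseteq> cube n"
  using q by (auto simp: set_Pi_pmf cube_def PiE_dflt_def PiE_def extensional_def)

lemma center_Pi_pmf:
  assumes "i < n"
  shows "center (Pi_pmf {..<n} undefined q) i = measure_pmf.expectation (q i) (\<lambda>x. x)"
proof -
  have "center (Pi_pmf {..<n} undefined q) i
      = measure_pmf.expectation (map_pmf (\<lambda>f. f i) (Pi_pmf {..<n} undefined q)) (\<lambda>x. x)"
    unfolding center_def by simp
  then show ?thesis using assms by (simp add: Pi_pmf_component)
qed

lemma cond_plus_Pi_pmf:
  assumes i: "i < n" and y: "y \<in> set_pmf (Pi_pmf {..<n} undefined q)"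
  shows "cond_plus (Pi_pmf {..<n} undefined q) y i = pmf (q i) 1"
proof -
  let ?\<xi> = "Pi_pmf {..<n} undefined q"
  define R where "R = (\<Prod>j\<in>{..<n} - {i}. pmf (q j) (y j))"
  have outside: "y j = undefined" if "j \<notin> {..<n}" for j
    using y set_Pi_pmf_subset[of "{..<n}" undefined q] that by auto
  have pmf_upd: "pmf ?\<xi> (y(i := c)) = pmf (q i) c * R" for c
  proof -
    have "pmf ?\<xi> (y(i := c)) = (\<Prod>j\<in>{..<n}. pmf (q j) ((y(i := c)) j))"
      using i outside by (subst pmf_Pi') auto
    also have "\<dots> = pmf (q i) c * (\<Prod>j\<in>{..<n} - {i}. pmf (q j) ((y(i := c)) j))"
      using i by (subst prod.remove[of _ i]) auto
    also have "(\<Prod>j\<in>{..<n} - {i}. pmf (q j) ((y(i := c)) j)) = R"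
      unfolding R_def by (rule prod.cong) auto
    finally show ?thesis .
  qed
  have "0 < pmf ?\<xi> y" using y by (simp add: pmf_positive)
  then have "R \<noteq> 0" using pmf_upd[of "y i"] by auto
  moreover have "pmf (q i) 1 + pmf (q i) (-1) = 1"
    by (rule pmf_sign_valued_total[OF q[OF i]])
  ultimately show ?thesis
    unfolding cond_plus_def Let_def pmf_upd by (simp add: distrib_right[symmetric])
qed

end

lemma set_pmf_product_measure:
  "product_measure n \<xi> \<Longrightarrow> set_pmf \<xi> \<subseteq> cube n"
  unfolding product_measure_def using set_Pi_pmf_subset_cube by blast

lemma cond_plus_product_measure:
  assumes "product_measure n \<xi>" "i < n" "y \<in> set_pmf \<xi>"
  shows "cond_plus \<xi> y i = (1 + center \<xi> i) / 2"
proof -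
  obtain q where q: "\<And>i. i < n \<Longrightarrow> set_pmf (q i) \<subseteq> {-1, 1}"
    and \<xi>: "\<xi> = Pi_pmf {..<n} undefined q"
    using assms(1) unfolding product_measure_def by blast
  show ?thesis
    using cond_plus_Pi_pmf[OF q assms(2)] center_Pi_pmf[OF q assms(2)] pmf_sign_valued_1[OF q[OF assms(2)]]
      assms(3) \<xi> by simp
qed

lemma product_measure_eq_by_center:
  assumes "product_measure n \<xi>" "product_measure n \<xi>'" "\<And>i. i < n \<Longrightarrow> center \<xi> i = center \<xi>' i"
  shows "\<xi> = \<xi>'"
proof -
  obtain q where q: "\<And>i. i < n \<Longrightarrow> set_pmf (q i) \<subseteq> {-1, 1}"
    and \<xi>: "\<xi> = Pi_pmf {..<n} undefined q"
    using assms(1) unfolding product_measure_def by blast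
  obtain q' where q': "\<And>i. i < n \<Longrightarrow> set_pmf (q' i) \<subseteq> {-1, 1}"
    and \<xi>': "\<xi>' = Pi_pmf {..<n} undefined q'"
    using assms(2) unfolding product_measure_def by blast
  have "q i = q' i" if i: "i < n" for i
  proof -
    have "q i = sign_pmf ((1 + center \<xi> i) / 2)"
      using sign_valued_pmf_eq_sign_pmf[OF q[OF i]] center_Pi_pmf[OF q i] \<xi> by simp
    also have "\<dots> = q' i"
      using sign_valued_pmf_eq_sign_pmf[OF q'[OF i]] center_Pi_pmf[OF q' i] \<xi>' assms(3)[OF i] by simp
    finally show ?thesis .
  qed
  then show ?thesis unfolding \<xi> \<xi>' by (intro Pi_pmf_cong) auto
qed

lemma ex1_product_measure_with_center:
  assumes "\<And>i. i < n \<Longrightarrow> \<bar>m i\<bar> \<le> 1"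
  shows "\<exists>!\<xi>. product_measure n \<xi> \<and> (\<forall>i<n. center \<xi> i = m i)"
proof -
  define q where "q i = sign_pmf ((1 + m i) / 2)" for i
  have bounds: "0 \<le> (1 + m i) / 2" "(1 + m i) / 2 \<le> 1" if "i < n" for i
    using assms[OF that] by auto
  have q_sign: "set_pmf (q i) \<subseteq> {-1, 1}" if "i < n" for i
    unfolding q_def by (rule set_sign_pmf[OF bounds[OF that]])
  have "center (Pi_pmf {..<n} undefined q) i = m i" if "i < n" for i
    using center_Pi_pmf[of n q, OF q_sign that] expectation_sign_pmf[OF bounds[OF that]]
    by (simp add: q_def field_simps)
  moreover have "product_measure n (Pi_pmf {..<n} undefined q)"
    unfolding product_measure_def using q_sign by blast
  ultimately show ?thesis
    by (intro ex1I[of _ "Pi_pmf {..<n} undefined q"]) (auto intro: product_measure_eq_by_center)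
qed

text \<open>The maximal coupling of \<open>sign_pmf p\<close> and \<open>sign_pmf q\<close>: the two signs differ
  with probability \<open>\<bar>p - q\<bar>\<close>.\<close>
definition sign_coupling :: "real \<Rightarrow> real \<Rightarrow> (real \<times> real) pmf" where
  "sign_coupling p q = pmf_of_list
     [((1, 1), min p q), ((1, -1), p - min p q), ((-1, 1), q - min p q), ((-1, -1), 1 - max p q)]"

context
  fixes p q :: real
  assumes p: "0 \<le> p" "p \<le> 1" and q: "0 \<le> q" "q \<le> 1"
begin

lemma sign_coupling_wf:
  "pmf_of_list_wf [((1::real, 1::real), min p q), ((1, -1), p - min p q), ((-1, 1), q - min p q), ((-1, -1), 1 - max p q)]"
  using p q by (auto simp: pmf_of_list_wf_def min_def max_def)

lemma set_sign_coupling: "set_pmf (sign_coupling p q) \<subseteq> {(1, 1), (1, -1), (-1, 1), (-1, -1)}"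
  unfolding sign_coupling_def using set_pmf_of_list[OF sign_coupling_wf] by auto

lemma measure_sign_coupling:
  "measure (sign_coupling p q) S =
     (if (1, 1) \<in> S then min p q else 0) + (if (1, -1) \<in> S then p - min p q else 0)
     + (if (-1, 1) \<in> S then q - min p q else 0) + (if (-1, -1) \<in> S then 1 - max p q else 0)"
  unfolding sign_coupling_def by (subst measure_pmf_of_list[OF sign_coupling_wf]) auto

lemma map_fst_sign_coupling: "map_pmf fst (sign_coupling p q) = sign_pmf p"
  by (rule pmf_eqI)
     (use p q in \<open>auto simp: pmf_map measure_sign_coupling measure_sign_pmf
                               simp flip: measure_pmf_single\<close>)

lemma map_snd_sign_coupling: "map_pmf snd (sign_coupling p q) = sign_pmf q"
  by (rule pmf_eqI)
     (use p q in \<open>auto simp: pmf_map measure_sign_coupling measure_sign_pmf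
                               simp flip: measure_pmf_single\<close>)

lemma expectation_sign_coupling:
  "measure_pmf.expectation (sign_coupling p q) f = min p q * f (1, 1) + (p - min p q) * f (1, -1)
     + (q - min p q) * f (-1, 1) + (1 - max p q) * f (-1, -1)"
proof -
  have "measure_pmf.expectation (sign_coupling p q) f
      = (\<Sum>a\<in>{(1, 1), (1, -1), (-1, 1), (-1, -1)}. f a * pmf (sign_coupling p q) a)"
    by (rule integral_measure_pmf_real) (use set_sign_coupling in auto)
  then show ?thesis by (simp add: measure_sign_coupling flip: measure_pmf_single)
qed

end

definition glauber :: "(nat \<Rightarrow> real) pmf \<Rightarrow> nat \<Rightarrow> (nat \<Rightarrow> real) \<Rightarrow> (nat \<Rightarrow> real) pmf" where
  "glauber \<mu> n x = bind_pmf (pmf_of_set {..<n}) (\<lambda>i. glauber_step \<mu> i x)"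

lemma set_pmf_of_set_lessThan: "(n::nat) > 0 \<Longrightarrow> set_pmf (pmf_of_set {..<n}) = {..<n}"
  by (rule set_pmf_of_set) auto

lemma glauber_stationary:
  assumes "n > 0" "set_pmf \<mu> \<subseteq> cube n"
  shows "bind_pmf \<mu> (glauber \<mu> n) = \<mu>"
proof -
  have "bind_pmf \<mu> (glauber \<mu> n) = bind_pmf (pmf_of_set {..<n}) (\<lambda>i. bind_pmf \<mu> (glauber_step \<mu> i))"
    unfolding glauber_def by (rule bind_commute_pmf)
  also have "\<dots> = bind_pmf (pmf_of_set {..<n}) (\<lambda>_. \<mu>)"
    using assms by (intro bind_pmf_cong refl glauber_step_stationary) (auto simp: set_pmf_of_set_lessThan)
  finally show ?thesis by simp
qed

definition coupled_glauber ::
    "(nat \<Rightarrow> real) pmf \<Rightarrow> (nat \<Rightarrow> real) pmf \<Rightarrow> nat \<Rightarrow>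
     (nat \<Rightarrow> real) \<times> (nat \<Rightarrow> real) \<Rightarrow> ((nat \<Rightarrow> real) \<times> (nat \<Rightarrow> real)) pmf" where
  "coupled_glauber \<mu>\<^sub>1 \<mu>\<^sub>2 n xy = bind_pmf (pmf_of_set {..<n}) (\<lambda>i.
     map_pmf (\<lambda>(a, b). ((fst xy)(i := a), (snd xy)(i := b)))
       (sign_coupling (cond_plus \<mu>\<^sub>1 (fst xy) i) (cond_plus \<mu>\<^sub>2 (snd xy) i)))"

lemma map_fst_coupled_glauber: "map_pmf fst (coupled_glauber \<mu>\<^sub>1 \<mu>\<^sub>2 n xy) = glauber \<mu>\<^sub>1 n (fst xy)"
proof -
  have "map_pmf (\<lambda>(a, b). (fst xy)(i := a)) (sign_coupling p q) = map_pmf (fun_upd (fst xy) i) (sign_pmf p)"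
    if "0 \<le> p" "p \<le> 1" "0 \<le> q" "q \<le> 1" for i p q
    using map_fst_sign_coupling[OF that] pmf.map_comp[of "fun_upd (fst xy) i" fst "sign_coupling p q"]
    by (simp add: o_def case_prod_unfold)
  then show ?thesis
    unfolding coupled_glauber_def glauber_def glauber_step_def map_bind_pmf pmf.map_comp
    by (simp add: o_def case_prod_unfold cond_plus_bounds)
qed

lemma map_snd_coupled_glauber: "map_pmf snd (coupled_glauber \<mu>\<^sub>1 \<mu>\<^sub>2 n xy) = glauber \<mu>\<^sub>2 n (snd xy)"
proof -
  have "map_pmf (\<lambda>(a, b). (snd xy)(i := b)) (sign_coupling p q) = map_pmf (fun_upd (snd xy) i) (sign_pmf q)"
    if "0 \<le> p" "p \<le> 1" "0 \<le> q" "q \<le> 1" for i p q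
    using map_snd_sign_coupling[OF that] pmf.map_comp[of "fun_upd (snd xy) i" snd "sign_coupling p q"]
    by (simp add: o_def case_prod_unfold)
  then show ?thesis
    unfolding coupled_glauber_def glauber_def glauber_step_def map_bind_pmf pmf.map_comp
    by (simp add: o_def case_prod_unfold cond_plus_bounds)
qed

lemma map_bind_pmf_stationary:
  assumes "\<And>a. map_pmf f (K a) = L (f a)" "bind_pmf (map_pmf f c) L = map_pmf f c"
  shows "map_pmf f (bind_pmf c K) = map_pmf f c"
  using assms by (simp add: map_bind_pmf bind_map_pmf)

lemma coupled_glauber_coupling:
  assumes "n > 0" "set_pmf \<mu>\<^sub>1 \<subseteq> cube n" "set_pmf \<mu>\<^sub>2 \<subseteq> cube n"
    and "map_pmf fst c = \<mu>\<^sub>1" "map_pmf snd c = \<mu>\<^sub>2"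
  shows "map_pmf fst (bind_pmf c (coupled_glauber \<mu>\<^sub>1 \<mu>\<^sub>2 n)) = \<mu>\<^sub>1"
    and "map_pmf snd (bind_pmf c (coupled_glauber \<mu>\<^sub>1 \<mu>\<^sub>2 n)) = \<mu>\<^sub>2"
  using map_bind_pmf_stationary[of fst "coupled_glauber \<mu>\<^sub>1 \<mu>\<^sub>2 n" "glauber \<mu>\<^sub>1 n" c]
    map_bind_pmf_stationary[of snd "coupled_glauber \<mu>\<^sub>1 \<mu>\<^sub>2 n" "glauber \<mu>\<^sub>2 n" c]
    glauber_stationary assms
  by (simp_all add: map_fst_coupled_glauber map_snd_coupled_glauber)

lemma hamming_eq_sum: "real (hamming n x y) = (\<Sum>i<n. if x i \<noteq> y i then 1 else 0)"
  unfolding hamming_def by (simp add: sum.inter_filter[symmetric])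

lemma hamming_fun_upd:
  assumes "i < n"
  shows "real (hamming n (x(i := a)) (y(i := b))) =
     real (hamming n x y) - (if x i \<noteq> y i then 1 else 0) + (if a \<noteq> b then 1 else 0)"
proof -
  have "(\<Sum>j<n. if (x(i := a)) j \<noteq> (y(i := b)) j then 1 else 0 :: real)
      = (if a \<noteq> b then 1 else 0) + (\<Sum>j\<in>{..<n} - {i}. if x j \<noteq> y j then 1 else 0)"
    using assms by (subst sum.remove[of _ i]) (auto intro!: sum.cong)
  moreover have "(\<Sum>j<n. if x j \<noteq> y j then 1 else 0 :: real)
      = (if x i \<noteq> y i then 1 else 0) + (\<Sum>j\<in>{..<n} - {i}. if x j \<noteq> y j then 1 else 0)"
    using assms by (subst sum.remove[of _ i]) auto
  ultimately show ?thesis unfolding hamming_eq_sum by simp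
qed

lemma finite_set_coupled_glauber: "n > 0 \<Longrightarrow> finite (set_pmf (coupled_glauber \<mu>\<^sub>1 \<mu>\<^sub>2 n xy))"
  unfolding coupled_glauber_def
  by (simp add: set_pmf_of_set_lessThan cond_plus_bounds
      finite_subset[OF set_sign_coupling])

lemma expectation_hamming_coupled_glauber:
  assumes n: "n > 0"
  shows "measure_pmf.expectation (coupled_glauber \<mu>\<^sub>1 \<mu>\<^sub>2 n (x, y)) (\<lambda>(x, y). real (hamming n x y))
     = (1 - 1 / n) * real (hamming n x y) + (\<Sum>i<n. \<bar>cond_plus \<mu>\<^sub>1 x i - cond_plus \<mu>\<^sub>2 y i\<bar>) / n"
proof -
  define H where "H = real (hamming n x y)"
  define D where "D i = \<bar>cond_plus \<mu>\<^sub>1 x i - cond_plus \<mu>\<^sub>2 y i\<bar>" for i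
  define I where "I i = (if x i \<noteq> y i then 1 else 0 :: real)" for i
  have coordinate: "measure_pmf.expectation (sign_coupling (cond_plus \<mu>\<^sub>1 x i) (cond_plus \<mu>\<^sub>2 y i))
        (\<lambda>(a, b). real (hamming n (x(i := a)) (y(i := b)))) = H - I i + D i"
    if i: "i < n" for i
  proof -
    define p where "p = cond_plus \<mu>\<^sub>1 x i"
    define q where "q = cond_plus \<mu>\<^sub>2 y i"
    have "measure_pmf.expectation (sign_coupling p q) (\<lambda>(a, b). real (hamming n (x(i := a)) (y(i := b))))
        = min p q * (H - I i) + (p - min p q) * (H - I i + 1) + (q - min p q) * (H - I i + 1)
            + (1 - max p q) * (H - I i)"
      by (subst expectation_sign_coupling)
         (simp_all add: p_def q_def cond_plus_bounds hamming_fun_upd[OF i] H_def I_def)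
    also have "\<dots> = H - I i + \<bar>p - q\<bar>" by (auto simp: min_def max_def abs_if algebra_simps)
    finally show ?thesis unfolding p_def q_def D_def .
  qed
  have "measure_pmf.expectation (coupled_glauber \<mu>\<^sub>1 \<mu>\<^sub>2 n (x, y)) (\<lambda>(x, y). real (hamming n x y))
      = (\<Sum>i<n. (H - I i + D i) / n)"
    unfolding coupled_glauber_def using n
    by (subst pmf_expectation_bind_pmf_of_set)
       (auto simp: cond_plus_bounds finite_subset[OF set_sign_coupling] divide_inverse_commute
             coordinate[unfolded case_prod_unfold] case_prod_unfold intro!: sum.cong)
  also have "\<dots> = (1 - 1 / n) * H + (\<Sum>i<n. D i) / n"
    using n by (simp add: H_def I_def hamming_eq_sum sum.distrib sum_subtractf
                          flip: sum_divide_distrib) (simp add: field_simps)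
  finally show ?thesis unfolding H_def D_def .
qed

lemma expectation_hamming_bind_coupled_glauber_le:
  fixes G :: "(nat \<Rightarrow> real) \<Rightarrow> real"
  assumes n: "n > 0" and c: "finite (set_pmf c)"
    and gap: "\<And>x y. (x, y) \<in> set_pmf c \<Longrightarrow> (\<Sum>i<n. \<bar>cond_plus \<mu>\<^sub>1 x i - cond_plus \<mu>\<^sub>2 y i\<bar>) \<le> G x"
  shows "measure_pmf.expectation (bind_pmf c (coupled_glauber \<mu>\<^sub>1 \<mu>\<^sub>2 n)) (\<lambda>(x, y). real (hamming n x y))
      \<le> (1 - 1 / n) * measure_pmf.expectation c (\<lambda>(x, y). real (hamming n x y))
          + measure_pmf.expectation (map_pmf fst c) G / n"
proof -
  let ?h = "\<lambda>(x, y). real (hamming n x y)"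
  have int: "integrable (measure_pmf c) f" for f :: "_ \<Rightarrow> real"
    by (rule integrable_measure_pmf_finite[OF c])
  have "measure_pmf.expectation (bind_pmf c (coupled_glauber \<mu>\<^sub>1 \<mu>\<^sub>2 n)) ?h
      = measure_pmf.expectation c (\<lambda>xy. measure_pmf.expectation (coupled_glauber \<mu>\<^sub>1 \<mu>\<^sub>2 n xy) ?h)"
    by (rule expectation_bind_pmf_finite[OF c finite_set_coupled_glauber[OF n]])
  also have "\<dots> \<le> measure_pmf.expectation c (\<lambda>xy. (1 - 1 / n) * ?h xy + G (fst xy) / n)"
  proof (rule integral_mono_AE[OF int int], rule AE_pmfI)
    fix xy assume xy: "xy \<in> set_pmf c"
    obtain x y where [simp]: "xy = (x, y)" by (cases xy)
    show "measure_pmf.expectation (coupled_glauber \<mu>\<^sub>1 \<mu>\<^sub>2 n xy) ?h \<le> (1 - 1 / n) * ?h xy + G (fst xy) / n"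
      using gap[of x y] xy n by (simp add: expectation_hamming_coupled_glauber divide_right_mono)
  qed
  also have "\<dots> = (1 - 1 / n) * measure_pmf.expectation c ?h + measure_pmf.expectation (map_pmf fst c) G / n"
    by (simp add: int)
  finally show ?thesis .
qed

lemma cInf_le_of_contraction:
  fixes S :: "real set" and a b :: real
  assumes "S \<noteq> {}" "0 \<le> a" "\<And>s. s \<in> S \<Longrightarrow> Inf S \<le> a * s + b"
  shows "(1 - a) * Inf S \<le> b"
proof (cases "a = 0")
  case True
  with assms show ?thesis by auto
next
  case False
  then have a: "a > 0" using assms(2) by simp
  have "(Inf S - b) / a \<le> Inf S"
    by (rule cInf_greatest[OF assms(1)]) (use assms(3) a in \<open>fastforce simp: divide_le_eq mult.commute\<close>)
  then show ?thesis using a by (simp add: divide_le_eq algebra_simps)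
qed

lemma W1_le_expectation_hamming:
  assumes "map_pmf fst c = \<nu>" "map_pmf snd c = \<xi>"
  shows "W1 n \<nu> \<xi> \<le> measure_pmf.expectation c (\<lambda>(x, y). real (hamming n x y))"
  unfolding W1_def using assms
  by (intro cInf_lower bdd_belowI[of _ 0]) (auto intro!: integral_nonneg_AE simp: case_prod_unfold)

lemma W1_le_expectation_of_cond_plus_gap:
  fixes G :: "(nat \<Rightarrow> real) \<Rightarrow> real"
  assumes \<nu>: "set_pmf \<nu> \<subseteq> cube n" and \<xi>: "set_pmf \<xi> \<subseteq> cube n"
    and gap: "\<And>x y. x \<in> set_pmf \<nu> \<Longrightarrow> y \<in> set_pmf \<xi> \<Longrightarrow>
                  (\<Sum>i<n. \<bar>cond_plus \<nu> x i - cond_plus \<xi> y i\<bar>) \<le> G x"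
  shows "W1 n \<nu> \<xi> \<le> measure_pmf.expectation \<nu> G"
proof (cases "n = 0")
  case True
  obtain y where "y \<in> set_pmf \<xi>" using set_pmf_not_empty[of \<xi>] by blast
  then have "0 \<le> measure_pmf.expectation \<nu> G"
    using gap True by (intro integral_nonneg_AE AE_pmfI) auto
  moreover have "W1 n \<nu> \<xi> \<le> 0"
    using W1_le_expectation_hamming[of "pair_pmf \<nu> \<xi>" \<nu> \<xi> n] True
    by (simp add: map_fst_pair_pmf map_snd_pair_pmf hamming_def case_prod_unfold)
  ultimately show ?thesis by linarith
next
  case False
  then have n: "n > 0" by simp
  let ?h = "\<lambda>(x, y). real (hamming n x y)"
  define S where "S = {measure_pmf.expectation c ?h | c. map_pmf fst c = \<nu> \<and> map_pmf snd c = \<xi>}"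
  have W1: "W1 n \<nu> \<xi> = Inf S" unfolding W1_def S_def ..
  have "S \<noteq> {}"
    unfolding S_def using map_fst_pair_pmf map_snd_pair_pmf by blast
  moreover have "Inf S \<le> (1 - 1 / n) * s + measure_pmf.expectation \<nu> G / n" if "s \<in> S" for s
  proof -
    obtain c where c: "map_pmf fst c = \<nu>" "map_pmf snd c = \<xi>" and s: "s = measure_pmf.expectation c ?h"
      using \<open>s \<in> S\<close> unfolding S_def by blast
    have "set_pmf c \<subseteq> set_pmf \<nu> \<times> set_pmf \<xi>"
      by (auto simp flip: c intro: rev_image_eqI)
    then have "finite (set_pmf c)"
      using finite_subset[OF \<nu> finite_cube] finite_subset[OF \<xi> finite_cube] finite_subset by blast
    have "Inf S \<le> measure_pmf.expectation (bind_pmf c (coupled_glauber \<nu> \<xi> n)) ?h"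
      unfolding W1[symmetric] by (intro W1_le_expectation_hamming coupled_glauber_coupling[OF n \<nu> \<xi> c])
    also have "\<dots> \<le> (1 - 1 / n) * s + measure_pmf.expectation \<nu> G / n"
      using expectation_hamming_bind_coupled_glauber_le[OF n \<open>finite (set_pmf c)\<close>, of \<nu> \<xi> G]
        gap \<open>set_pmf c \<subseteq> _\<close> c(1) s by force
    finally show ?thesis .
  qed
  ultimately have "(1 - (1 - 1 / n)) * Inf S \<le> measure_pmf.expectation \<nu> G / n"
    using n by (intro cInf_le_of_contraction) (auto simp: field_simps)
  then show ?thesis
    using n unfolding W1 by (simp add: field_simps)
qed

lemma W1_product_measure_le:
  assumes \<nu>: "set_pmf \<nu> \<subseteq> cube n" and \<xi>: "product_measure n \<xi>"
  shows "W1 n \<nu> \<xi> \<le> measure_pmf.expectation \<nu> (\<lambda>x. \<Sum>i<n. \<bar>gvec \<nu> x i - center \<xi> i\<bar>) / 2"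
proof -
  have "W1 n \<nu> \<xi> \<le> measure_pmf.expectation \<nu> (\<lambda>x. (\<Sum>i<n. \<bar>gvec \<nu> x i - center \<xi> i\<bar>) / 2)"
  proof (rule W1_le_expectation_of_cond_plus_gap[OF \<nu> set_pmf_product_measure[OF \<xi>]])
    fix x y assume y: "y \<in> set_pmf \<xi>"
    have "\<bar>cond_plus \<nu> x i - cond_plus \<xi> y i\<bar> = \<bar>gvec \<nu> x i - center \<xi> i\<bar> / 2" if "i < n" for i
      using cond_plus_product_measure[OF \<xi> that y] by (simp add: gvec_eq_cond_plus abs_if field_simps)
    then show "(\<Sum>i<n. \<bar>cond_plus \<nu> x i - cond_plus \<xi> y i\<bar>) \<le> (\<Sum>i<n. \<bar>gvec \<nu> x i - center \<xi> i\<bar>) / 2"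
      unfolding sum_divide_distrib by (intro sum_mono) simp
  qed
  then show ?thesis by simp
qed

lemma expectation_abs_le_sqrt_expectation_sq:
  fixes h :: "'a \<Rightarrow> real"
  assumes "finite (set_pmf M)"
  shows "measure_pmf.expectation M (\<lambda>x. \<bar>h x\<bar>) \<le> sqrt (measure_pmf.expectation M (\<lambda>x. (h x)\<^sup>2))"
proof -
  let ?E = "measure_pmf.expectation M"
  have "0 \<le> ?E (\<lambda>x. (\<bar>h x\<bar> - ?E (\<lambda>x. \<bar>h x\<bar>))\<^sup>2)" by simp
  also have "\<dots> = ?E (\<lambda>x. \<bar>h x\<bar>\<^sup>2) - (?E (\<lambda>x. \<bar>h x\<bar>))\<^sup>2"
    by (rule measure_pmf.variance_eq) (simp_all add: integrable_measure_pmf_finite assms)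
  finally show ?thesis by (simp add: real_le_rsqrt)
qed

lemma sum_sqrt_le_sqrt_mult_sum:
  fixes v :: "nat \<Rightarrow> real"
  assumes "\<And>i. i < n \<Longrightarrow> 0 \<le> v i"
  shows "(\<Sum>i<n. sqrt (v i)) \<le> sqrt (real n * (\<Sum>i<n. v i))"
proof -
  have "(\<Sum>i<n. sqrt (v i))\<^sup>2 \<le> (\<Sum>i<n. (sqrt (v i))\<^sup>2) * card {..<n}"
    by (rule sum_squared_le_sum_of_squares)
  also have "\<dots> = real n * (\<Sum>i<n. v i)" using assms by simp
  finally show ?thesis by (simp add: real_le_rsqrt)
qed

lemma W1_le_sqrt_trace_H:
  assumes \<nu>: "set_pmf \<nu> \<subseteq> cube n" and \<xi>: "product_measure n \<xi>"
    and center: "\<And>i. i < n \<Longrightarrow> center \<xi> i = measure_pmf.expectation \<nu> (\<lambda>y. gvec \<nu> y i)"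
  shows "W1 n \<nu> \<xi> \<le> sqrt (real n * trace_H n \<nu>) / 2"
proof -
  have fin: "finite (set_pmf \<nu>)" using finite_subset[OF \<nu> finite_cube] .
  define v where "v i = measure_pmf.expectation \<nu> (\<lambda>y. (gvec \<nu> y i - center \<xi> i)\<^sup>2)" for i
  have "W1 n \<nu> \<xi> \<le> (\<Sum>i<n. measure_pmf.expectation \<nu> (\<lambda>x. \<bar>gvec \<nu> x i - center \<xi> i\<bar>)) / 2"
    using W1_product_measure_le[OF \<nu> \<xi>] by (simp add: integrable_measure_pmf_finite[OF fin])
  also have "\<dots> \<le> (\<Sum>i<n. sqrt (v i)) / 2"
    unfolding v_def by (intro divide_right_mono sum_mono expectation_abs_le_sqrt_expectation_sq fin) simp
  also have "\<dots> \<le> sqrt (real n * (\<Sum>i<n. v i)) / 2"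
    unfolding v_def by (intro divide_right_mono sum_sqrt_le_sqrt_mult_sum) simp_all
  also have "(\<Sum>i<n. v i) = trace_H n \<nu>"
    unfolding trace_H_eq_sum_variance v_def using center by simp
  finally show ?thesis .
qed

theorem proposition3p5:
  fixes n :: nat and \<nu> :: "(nat \<Rightarrow> real) pmf"
  assumes "set_pmf \<nu> \<subseteq> cube n"
  defines "m \<equiv> (\<lambda>i. measure_pmf.expectation \<nu> (\<lambda>y. gvec \<nu> y i))"
  shows "(\<forall>i<n. center \<nu> i = m i)
    \<and> (\<exists>!\<xi>. product_measure n \<xi> \<and> (\<forall>i<n. center \<xi> i = m i))
    \<and> (\<forall>\<xi>. product_measure n \<xi> \<and> (\<forall>i<n. center \<xi> i = m i)
           \<longrightarrow> W1 n \<nu> \<xi> \<le> sqrt (real n * trace_H n \<nu>))"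
proof -
  have "\<forall>i<n. center \<nu> i = m i"
    unfolding m_def using center_eq_expectation_gvec[OF assms(1)] by blast
  moreover have "\<exists>!\<xi>. product_measure n \<xi> \<and> (\<forall>i<n. center \<xi> i = m i)"
    unfolding m_def by (intro ex1_product_measure_with_center abs_expectation_gvec_le_1)
  moreover have "W1 n \<nu> \<xi> \<le> sqrt (real n * trace_H n \<nu>)"
    if "product_measure n \<xi> \<and> (\<forall>i<n. center \<xi> i = m i)" for \<xi>
  proof -
    have "W1 n \<nu> \<xi> \<le> sqrt (real n * trace_H n \<nu>) / 2"
      using that by (intro W1_le_sqrt_trace_H[OF assms(1)]) (auto simp: m_def)
    moreover have "0 \<le> sqrt (real n * trace_H n \<nu>)" using trace_H_nonneg[of n \<nu>] by simp
    ultimately show ?thesis by linarith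
  qed
  ultimately show ?thesis by blast
qed

end
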